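(* For $\phi=Q+iP$ with $P,Q\in L^2(\mathbb{T};\mathbb{R})$, let $\Psi_\lambda(x)$ be the $2\times2$ matrix solution of $$\Big(\begin{bmatrix}0&1\\-1&0\end{bmatrix}\frac{\partial}{\partial x}-\begin{bmatrix}P&-Q\\-Q&-P\end{bmatrix}-\frac\lambda2\begin{bmatrix}1&0\\0&1\end{bmatrix}\Big)\Psi_\lambda(x)=0,\qquad \Psi_\lambda(0)=I,$$ and let $\Delta_\phi(\lambda)=\operatorname{trace}\Psi_\lambda(2\pi)$. Then for all $0\le k<\infty$ and all $N<\infty$, the map $\phi\mapsto(\Delta^{(j)}_\phi(0))_{j=0}^k$ is a Lipschitz function from $\Omega_N$ to $\ell^2$. Moreover, $\phi\mapsto\Delta_\phi(\lambda)$ is continuous from the norm topology to the topology of uniform convergence (in $\lambda$) on compact sets.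
   Context: $\mathbb{T}=\mathbb{R}/2\pi\mathbb{Z}$; $\Omega_N=\{\phi\in L^2(\mathbb{T};\mathbb{C}):\int_{\mathbb{T}}|\phi|^2\frac{dx}{2\pi}\le N\}$ with the $L^2$ norm. $\Delta^{(j)}_\phi$ denotes the $j$-th derivative in $\lambda$. *)

theory Defs
  imports "HOL-Analysis.Analysis"
begin

text \<open>Elements of L^2(T;C), represented by functions on [0, 2 pi]
  (equivalently 2 pi-periodic functions), up to the L^2 seminorm.\<close>
definition L2T :: "(real \<Rightarrow> complex) \<Rightarrow> bool" where
  "L2T \<phi> \<longleftrightarrow> \<phi> \<in> borel_measurable (lebesgue_on {0..2*pi})
     \<and> integrable (lebesgue_on {0..2*pi}) (\<lambda>x. (cmod (\<phi> x))^2)"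

definition L2norm :: "(real \<Rightarrow> complex) \<Rightarrow> real" where
  "L2norm \<phi> = sqrt (integral\<^sup>L (lebesgue_on {0..2*pi}) (\<lambda>x. (cmod (\<phi> x))^2) / (2*pi))"

definition Omega :: "real \<Rightarrow> (real \<Rightarrow> complex) set" where
  "Omega N = {\<phi>. L2T \<phi> \<and> integral\<^sup>L (lebesgue_on {0..2*pi}) (\<lambda>x. (cmod (\<phi> x))^2) / (2*pi) \<le> N}"

definition Jmat :: "complex^2^2" where
  "Jmat = vector [vector [0, 1], vector [-1, 0]]"

definition Vmat :: "(real \<Rightarrow> complex) \<Rightarrow> real \<Rightarrow> complex^2^2" where
  "Vmat \<phi> x = (let P = complex_of_real (Im (\<phi> x)); Q = complex_of_real (Re (\<phi> x)) in
      vector [vector [P, -Q], vector [-Q, -P]])"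

text \<open>Psi solves J Psi' - V Psi - (lambda/2) Psi = 0, Psi(0) = I on [0, 2 pi], in the
  (Caratheodory) integral sense: Psi continuous and
  J (Psi x - I) = integral_0^x (V t + lambda/2 I) Psi t dt.\<close>
definition is_Psi :: "(real \<Rightarrow> complex) \<Rightarrow> complex \<Rightarrow> (real \<Rightarrow> complex^2^2) \<Rightarrow> bool" where
  "is_Psi \<phi> lam \<Psi> \<longleftrightarrow> continuous_on {0..2*pi} \<Psi> \<and>
     (\<forall>x\<in>{0..2*pi}.
        (\<lambda>t. (Vmat \<phi> t + mat (lam/2)) ** \<Psi> t) integrable_on {0..x} \<and>
        Jmat ** (\<Psi> x - mat 1) = integral {0..x} (\<lambda>t. (Vmat \<phi> t + mat (lam/2)) ** \<Psi> t))"

definition Delta :: "(real \<Rightarrow> complex) \<Rightarrow> complex \<Rightarrow> complex" where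
  "Delta \<phi> lam = (THE d. \<exists>\<Psi>. is_Psi \<phi> lam \<Psi> \<and> d = trace (\<Psi> (2*pi)))"

end

theory Submission
  imports Defs "HOL-Complex_Analysis.Complex_Analysis"
begin

(* Write W = V_phi + (lam/2) I. The transfer matrix is the solution of the integral equation
   J (Psi x - I) = integral_0^x W Psi; it is the uniform limit of the Picard iterates, whose
   successive differences are bounded by sqrt (2 (omega T)^(n+1) / (n+1)!) when
   integral |W|^2 <= omega. Cauchy-Schwarz and Gronwall give |Psi|^2 <= 4 exp (2 omega T) and
   the stability estimate |Psi_1 - Psi_2|^2 <= 8 T exp (4 omega T) integral |W_1 - W_2|^2,
   so Delta_phi(lam) is Lipschitz in phi, locally uniformly in lam; this is the continuity
   statement. The Picard iterates are polynomials in lam, hence Delta_phi is entire as a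
   locally uniform limit of polynomials, and the Cauchy inequalities on the unit circle turn
   the Lipschitz bound for Delta into one for every derivative at 0. *)

(* Formal power series also use $ for coefficients; the resulting parse ambiguity grows
   exponentially with the number of matrix entries in a term. *)
no_notation fps_nth (infixl \<open>$\<close> 75)

lemma sq_le_of_le_add: "0 \<le> n \<Longrightarrow> n \<le> p + q \<Longrightarrow> n^2 \<le> 2 * p^2 + 2 * (q::real)^2"
  using power_mono[of n "p + q" 2] zero_le_power2[of "p - q"]
  by (simp add: power2_eq_square algebra_simps)

lemma norm_add_sq_le: "norm (a + b)^2 \<le> 2 * norm a^2 + 2 * norm (b::'a::real_normed_vector)^2"
proof -
  have "norm (a + b)^2 \<le> (norm a + norm b)^2"
    by (simp add: norm_triangle_ineq power_mono)
  also have "\<dots> \<le> 2 * norm a^2 + 2 * norm b^2"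
    using zero_le_power2[of "norm a - norm b"] by (simp add: power2_eq_square algebra_simps)
  finally show ?thesis .
qed

lemma nonneg_quadratic_imp_sq_le:
  fixes A B C :: real
  assumes "0 \<le> A" "\<And>s. 0 \<le> s^2 * A - 2 * s * C + B"
  shows "C^2 \<le> A * B"
proof (cases "A = 0")
  case True
  have "C = 0"
  proof (rule ccontr)
    assume "C \<noteq> 0"
    then show False
      using assms(2)[of "(B + 1) / (2 * C)"] True by simp
  qed
  then show ?thesis using True by simp
next
  case False
  have "0 \<le> A * ((C/A)^2 * A - 2 * (C/A) * C + B)"
    using assms(1) assms(2)[of "C/A"] by (rule mult_nonneg_nonneg)
  also have "\<dots> = A * B - C^2"
    using False by (simp add: power2_eq_square field_simps)
  finally show ?thesis by simp
qed

lemma Cauchy_Schwarz_integral: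
  fixes f g :: "real \<Rightarrow> real"
  assumes "(\<lambda>t. f t^2) integrable_on S" "(\<lambda>t. g t^2) integrable_on S"
    and "(\<lambda>t. f t * g t) integrable_on S"
  shows "(integral S (\<lambda>t. f t * g t))^2 \<le> integral S (\<lambda>t. f t^2) * integral S (\<lambda>t. g t^2)"
proof (rule nonneg_quadratic_imp_sq_le)
  show "0 \<le> integral S (\<lambda>t. f t^2)"
    using assms(1) by (rule integral_nonneg) simp
  fix s :: real
  have "((\<lambda>t. (s * f t - g t)^2) has_integral
      s^2 * integral S (\<lambda>t. f t^2) - 2 * s * integral S (\<lambda>t. f t * g t) + integral S (\<lambda>t. g t^2)) S"
  proof -
    have "((\<lambda>t. s^2 * f t^2 - 2 * s * (f t * g t) + g t^2) has_integral
        s^2 * integral S (\<lambda>t. f t^2) - 2 * s * integral S (\<lambda>t. f t * g t) + integral S (\<lambda>t. g t^2)) S"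
      using assms by (intro has_integral_add has_integral_diff has_integral_mult_right integrable_integral)
    then show ?thesis by (simp add: power2_eq_square algebra_simps)
  qed
  then show "0 \<le> s^2 * integral S (\<lambda>t. f t^2) - 2 * s * integral S (\<lambda>t. f t * g t)
      + integral S (\<lambda>t. g t^2)"
    by (rule has_integral_nonneg) simp
qed

lemma atLeastAtMost_sets_lebesgue: "{a..b::real} \<in> sets lebesgue"
  by (metis box_real(2) fmeasurableD lmeasurable_cbox)

lemma continuous_on_Icc_imp_measurable_bounded:
  fixes Y :: "real \<Rightarrow> 'a::euclidean_space"
  assumes "continuous_on {a..b} Y"
  shows "Y \<in> borel_measurable (lebesgue_on {a..b})" "bounded (Y ` {a..b})"
proof -
  show "Y \<in> borel_measurable (lebesgue_on {a..b})"
    by (rule continuous_imp_measurable_on_sets_lebesgue[OF assms atLeastAtMost_sets_lebesgue])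
  show "bounded (Y ` {a..b})"
    by (rule compact_imp_bounded[OF compact_continuous_image[OF assms]]) simp
qed

lemma integral_norm_sq_nonneg:
  fixes Y :: "real \<Rightarrow> 'a::real_normed_vector"
  assumes "continuous_on {0..T} Y" "x \<in> {0..T}"
  shows "0 \<le> integral {0..x} (\<lambda>t. norm (Y t)^2)"
  using assms
  by (intro integral_nonneg integrable_continuous_real continuous_intros)
    (auto intro: continuous_on_subset)

lemma integral_power_interval: "0 \<le> x \<Longrightarrow> integral {0..x} (\<lambda>t. t^n) = x^Suc n / Suc n"
proof -
  assume x: "0 \<le> x"
  have "((\<lambda>t. t^n) has_integral (x^Suc n / Suc n - 0^Suc n / Suc n)) {0..x}"
  proof (rule fundamental_theorem_of_calculus[OF x])
    fix t assume "t \<in> {0..x}"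
    have "((\<lambda>t. t^Suc n / Suc n) has_real_derivative (Suc n * t^n / Suc n)) (at t within {0..x})"
      by (intro derivative_eq_intros) auto
    then show "((\<lambda>t. t^Suc n / Suc n) has_vector_derivative t^n) (at t within {0..x})"
      by (simp add: has_real_derivative_iff_has_vector_derivative[symmetric])
  qed
  then show ?thesis by (simp add: integral_unique)
qed

lemma gronwall_inequality:
  fixes u :: "real \<Rightarrow> real"
  assumes u: "continuous_on {0..T} u" and "0 \<le> a" "0 \<le> K"
    and le: "\<And>x. x \<in> {0..T} \<Longrightarrow> u x \<le> a + K * integral {0..x} u"
    and x: "x \<in> {0..T}"
  shows "u x \<le> a * exp (K * x)"
proof -
  define h where "h y = exp (- (K * y)) * (a + K * integral {0..y} u)" for y
  have "h x \<le> h 0"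
  proof (rule DERIV_nonpos_imp_decreasing_open[of 0 x h])
    show "0 \<le> x" using x by auto
    have "continuous_on {0..T} h"
      unfolding h_def using u
      by (intro continuous_intros indefinite_integral_continuous_1 integrable_continuous_real)
    then show "continuous_on {0..x} h"
      by (rule continuous_on_subset) (use x in auto)
    fix y assume y: "0 < y" "y < x"
    then have yT: "y \<in> {0..T}" using x by auto
    have "(h has_real_derivative exp (- (K * y)) * (K * u y - K * (a + K * integral {0..y} u)))
        (at y within {0..T})"
      unfolding h_def
      by (rule derivative_eq_intros integral_has_real_derivative[OF u yT] refl)+
        (simp add: algebra_simps)
    then have "(h has_real_derivative exp (- (K * y)) * (K * u y - K * (a + K * integral {0..y} u)))
        (at y)"
      using y x by (subst (asm) at_within_interior[of y]) (auto simp: interior_atLeastAtMost_real)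
    moreover have "exp (- (K * y)) * (K * u y - K * (a + K * integral {0..y} u)) \<le> 0"
      using mult_left_mono[OF le[OF yT] \<open>0 \<le> K\<close>] by (simp add: mult_nonneg_nonpos)
    ultimately show "\<exists>d. (h has_real_derivative d) (at y) \<and> d \<le> 0" by blast
  qed
  then have "a + K * integral {0..x} u \<le> a * exp (K * x)"
    by (simp add: h_def exp_minus field_simps)
  then show ?thesis using le[OF x] by linarith
qed

lemma summable_sqrt_exp_series:
  assumes "0 \<le> c"
  shows "summable (\<lambda>n. sqrt (c^n / fact n))"
proof (rule summable_comparison_test')
  have "summable (\<lambda>n. (4 * c)^n / fact n)"
    using summable_exp[of "4 * c"] by (simp only: divide_inverse_commute)
  moreover have "summable (\<lambda>n. (1/4 :: real)^n)"
    by (rule summable_geometric) simp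
  ultimately show "summable (\<lambda>n. ((4 * c)^n / fact n + (1/4)^n) / 2)"
    by (intro summable_divide summable_add)
  fix n
  have "c^n / fact n = ((4 * c)^n / fact n) * (1/4)^n"
    by (simp add: power_mult_distrib power_divide)
  then have "sqrt (c^n / fact n) \<le> ((4 * c)^n / fact n + (1/4)^n) / 2"
    using assms by (simp only:) (intro arith_geo_mean_sqrt; simp)
  then show "norm (sqrt (c^n / fact n)) \<le> ((4 * c)^n / fact n + (1/4)^n) / 2"
    using assms by simp
qed

section \<open>\<open>2 \<times> 2\<close> complex matrices\<close>

type_synonym mat2 = "complex^2^2"

lemma mat2_eq_iff:
  "(A::mat2) = B \<longleftrightarrow> A$1$1 = B$1$1 \<and> A$1$2 = B$1$2 \<and> A$2$1 = B$2$1 \<and> A$2$2 = B$2$2"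
  by (auto simp: vec_eq_iff forall_2)

lemma mat2_mult_nth: "((A::mat2) ** B)$i$j = A$i$1 * B$1$j + A$i$2 * B$2$j"
  by (simp add: matrix_matrix_mult_def sum_2)

lemma mat_mult_nth: "(mat c ** (A::mat2))$i$j = c * A$i$j"
  using exhaust_2[of i] by (auto simp: mat2_mult_nth mat_def)

lemma norm_mat2_sq:
  "norm (A::mat2)^2 = cmod (A$1$1)^2 + cmod (A$1$2)^2 + cmod (A$2$1)^2 + cmod (A$2$2)^2"
  by (simp add: norm_vec_def L2_set_def sum_2)

lemma cmod_mult_add_mult_sq_le:
  "cmod (a*b + c*d)^2 \<le> (cmod a^2 + cmod c^2) * (cmod b^2 + cmod d^2)"
proof -
  have "cmod (a*b + c*d) \<le> cmod a * cmod b + cmod c * cmod d"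
    by (metis norm_mult norm_triangle_ineq)
  then have "cmod (a*b + c*d)^2 \<le> (cmod a * cmod b + cmod c * cmod d)^2"
    by (simp add: power_mono)
  also have "\<dots> \<le> (cmod a^2 + cmod c^2) * (cmod b^2 + cmod d^2)"
    using Cauchy_Schwarz_ineq_sum[of "\<lambda>i. if i = 0 then cmod a else cmod c"
        "\<lambda>i. if i = 0 then cmod b else cmod d" "{0, 1::nat}"]
    by simp
  finally show ?thesis .
qed

lemma norm_mat2_mult_le: "norm ((A::mat2) ** (B::mat2)) \<le> norm A * norm B"
proof (rule power2_le_imp_le)
  define a where "a i = cmod (A$i$1)^2 + cmod (A$i$2)^2" for i
  define b where "b j = cmod (B$1$j)^2 + cmod (B$2$j)^2" for j
  have entry: "cmod ((A ** B)$i$j)^2 \<le> a i * b j" for i j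
    unfolding a_def b_def mat2_mult_nth by (rule cmod_mult_add_mult_sq_le)
  have "norm (A ** B)^2 \<le> a 1 * b 1 + a 1 * b 2 + a 2 * b 1 + a 2 * b 2"
    unfolding norm_mat2_sq by (intro add_mono entry)
  also have "\<dots> = (norm A * norm B)^2"
    by (simp add: power_mult_distrib norm_mat2_sq a_def b_def algebra_simps)
  finally show "norm (A ** B)^2 \<le> (norm A * norm B)^2" .
qed simp

lemma mat2_mult_bounded_bilinear: "bounded_bilinear ((**) :: mat2 \<Rightarrow> mat2 \<Rightarrow> mat2)"
proof
  fix A A' B B' :: mat2 and r :: real
  show "(A + A') ** B = A ** B + A' ** B" "A ** (B + B') = A ** B + A ** B'"
    by (simp_all add: mat2_eq_iff mat2_mult_nth algebra_simps)
  show "(r *\<^sub>R A) ** B = r *\<^sub>R (A ** B)" "A ** (r *\<^sub>R B) = r *\<^sub>R (A ** B)"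
    by (simp_all add: mat2_eq_iff mat2_mult_nth scaleR_right_distrib)
  show "\<exists>K. \<forall>A B. norm ((A::mat2) ** (B::mat2)) \<le> norm A * norm B * K"
    by (intro exI[of _ 1] allI) (simp add: norm_mat2_mult_le)
qed

interpretation mat2_mult: bounded_bilinear "(**) :: mat2 \<Rightarrow> mat2 \<Rightarrow> mat2"
  by (rule mat2_mult_bounded_bilinear)

lemma mat_mult_mat: "mat a ** (mat b :: mat2) = mat (a * b)"
  by (simp add: mat2_eq_iff mat_mult_nth) (simp add: mat_def)

lemma mat_mult_commute: "(A::mat2) ** mat c = mat c ** A"
  by (simp add: mat2_eq_iff mat2_mult_nth mat_mult_nth) (simp add: mat_def)

lemma norm_mat: "norm (mat c :: mat2) = sqrt 2 * cmod c"
  by (simp add: norm_vec_def L2_set_def sum_2 mat_def real_sqrt_mult)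

lemma trace_mat_mult: "trace (mat c ** (A::mat2)) = c * trace A"
  by (simp add: trace_def sum_2 mat_mult_nth algebra_simps)

lemma trace_sum: "trace (\<Sum>k\<in>K. A k) = (\<Sum>k\<in>K. trace (A k :: 'a::comm_semiring_1^'n^'n))"
  by (induction K rule: infinite_finite_induct) (simp_all add: trace_add trace_0[simplified])

lemma bounded_linear_trace: "bounded_linear (trace :: mat2 \<Rightarrow> complex)"
proof -
  have "linear (trace :: mat2 \<Rightarrow> complex)"
    by (rule linearI) (simp_all add: trace_add trace_def sum_2 scaleR_add_right)
  then show ?thesis by (rule linear_conv_bounded_linear[THEN iffD1])
qed

lemma norm_trace_le: "cmod (trace (A::mat2)) \<le> 2 * norm A"
proof -
  have diag: "cmod (A$i$i) \<le> norm A" for i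
    by (meson Finite_Cartesian_Product.norm_nth_le order_trans)
  have "cmod (A$1$1) + cmod (A$2$2) \<le> 2 * norm A"
    using diag[of 1] diag[of 2] by linarith
  then show ?thesis
    using norm_triangle_ineq[of "A$1$1" "A$2$2"] by (simp add: trace_def sum_2)
qed

lemma Jmat_nth: "Jmat$1$1 = 0" "Jmat$1$2 = 1" "Jmat$2$1 = -1" "Jmat$2$2 = 0"
  by (simp_all add: Jmat_def)

lemma Jmat_mult_nth: "(Jmat ** (A::mat2))$1$j = A$2$j" "(Jmat ** A)$2$j = - A$1$j"
  by (simp_all add: mat2_mult_nth Jmat_nth)

lemma Jmat_mult_Jmat: "Jmat ** Jmat = - mat 1"
  by (simp add: mat2_eq_iff Jmat_mult_nth Jmat_nth mat_def)

lemma norm_Jmat_mult: "norm (Jmat ** (A::mat2)) = norm A"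
proof -
  have "norm (Jmat ** A)^2 = norm A^2"
    unfolding norm_mat2_sq Jmat_mult_nth by simp
  then show ?thesis
    using power2_eq_imp_eq[OF _ norm_ge_zero norm_ge_zero] by blast
qed

lemma Jmat_mult_eq_iff: "Jmat ** (P - mat 1) = G \<longleftrightarrow> P = mat 1 - Jmat ** (G::mat2)"
proof
  assume "Jmat ** (P - mat 1) = G"
  then have "Jmat ** G = (Jmat ** Jmat) ** (P - mat 1)"
    by (simp add: matrix_mul_assoc[symmetric])
  then show "P = mat 1 - Jmat ** G"
    by (simp add: Jmat_mult_Jmat mat2_mult.minus_left)
next
  assume "P = mat 1 - Jmat ** G"
  then show "Jmat ** (P - mat 1) = G"
    by (simp add: mat2_mult.minus_right matrix_mul_assoc Jmat_mult_Jmat mat2_mult.minus_left)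
qed

lemma integral_mat_mult_left:
  fixes A :: mat2 and f :: "real \<Rightarrow> mat2"
  shows "f integrable_on S \<Longrightarrow> integral S (\<lambda>t. A ** f t) = A ** integral S f"
  using integral_linear[OF _ mat2_mult.bounded_linear_right] by (simp add: o_def)

lemma integrable_mat_mult_left:
  fixes A :: mat2 and f :: "real \<Rightarrow> mat2"
  shows "f integrable_on S \<Longrightarrow> (\<lambda>t. A ** f t) integrable_on S"
  using integrable_linear[OF _ mat2_mult.bounded_linear_right] by (simp add: o_def)

section \<open>Square-integrable matrix functions\<close>

definition mat_sq_integrable :: "real \<Rightarrow> (real \<Rightarrow> mat2) \<Rightarrow> bool" where
  "mat_sq_integrable T W \<longleftrightarrow> W \<in> borel_measurable (lebesgue_on {0..T}) \<and>
     (\<lambda>t. norm (W t)^2) integrable_on {0..T}"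

definition mat_sq_integral :: "real \<Rightarrow> (real \<Rightarrow> mat2) \<Rightarrow> real" where
  "mat_sq_integral T W = integral {0..T} (\<lambda>t. norm (W t)^2)"

lemma mat_sq_integral_nonneg: "0 \<le> mat_sq_integral T W"
  unfolding mat_sq_integral_def
  by (cases "(\<lambda>t. norm (W t)^2) integrable_on {0..T}") (auto intro: integral_nonneg simp: not_integrable_integral)

lemma mat_sq_integral_le_imp_nonneg: "mat_sq_integral T W \<le> \<omega> \<Longrightarrow> 0 \<le> \<omega>"
  using mat_sq_integral_nonneg order_trans by blast

lemma mat_sq_integrable_absolutely_integrable:
  assumes "mat_sq_integrable T W"
  shows "W absolutely_integrable_on {0..T}"
proof (rule measurable_bounded_by_integrable_imp_absolutely_integrable)
  show "(\<lambda>t. 1 + norm (W t)^2) integrable_on {0..T}"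
    using assms by (intro integrable_add) (auto simp: mat_sq_integrable_def)
  show "norm (W t) \<le> 1 + norm (W t)^2" for t
    using zero_le_power2[of "2 * norm (W t) - 1"] by (simp add: power2_eq_square algebra_simps)
qed (use assms in \<open>auto simp: mat_sq_integrable_def\<close>)

lemma mat_sq_integrable_add:
  assumes V: "mat_sq_integrable T V" and W: "mat_sq_integrable T W"
  shows "mat_sq_integrable T (\<lambda>t. V t + W t)"
    and "mat_sq_integral T (\<lambda>t. V t + W t) \<le> 2 * mat_sq_integral T V + 2 * mat_sq_integral T W"
proof -
  have meas: "(\<lambda>t. V t + W t) \<in> borel_measurable (lebesgue_on {0..T})"
    using V W by (auto simp: mat_sq_integrable_def)
  have int_bound: "(\<lambda>t. 2 * norm (V t)^2 + 2 * norm (W t)^2) integrable_on {0..T}"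
    using V W by (auto simp: mat_sq_integrable_def intro!: integrable_add integrable_on_cmult_left)
  have int: "(\<lambda>t. norm (V t + W t)^2) integrable_on {0..T}"
  proof (rule measurable_bounded_by_integrable_imp_integrable[OF _ int_bound])
    show "(\<lambda>t. norm (V t + W t)^2) \<in> borel_measurable (lebesgue_on {0..T})"
      using meas by measurable
  qed (auto intro: norm_add_sq_le atLeastAtMost_sets_lebesgue)
  then show "mat_sq_integrable T (\<lambda>t. V t + W t)"
    using meas by (simp add: mat_sq_integrable_def)
  have "mat_sq_integral T (\<lambda>t. V t + W t) \<le> integral {0..T} (\<lambda>t. 2 * norm (V t)^2 + 2 * norm (W t)^2)"
    unfolding mat_sq_integral_def using int int_bound norm_add_sq_le by (rule integral_le)
  also have "\<dots> = 2 * mat_sq_integral T V + 2 * mat_sq_integral T W"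
    using V W by (simp add: mat_sq_integral_def mat_sq_integrable_def integral_add integrable_on_cmult_left)
  finally show "mat_sq_integral T (\<lambda>t. V t + W t) \<le> 2 * mat_sq_integral T V + 2 * mat_sq_integral T W" .
qed

lemma mat_sq_integrable_diff:
  assumes "mat_sq_integrable T V" "mat_sq_integrable T W"
  shows "mat_sq_integrable T (\<lambda>t. V t - W t)"
proof -
  have "mat_sq_integrable T (\<lambda>t. - W t)"
    using assms(2) by (auto simp: mat_sq_integrable_def)
  from mat_sq_integrable_add(1)[OF assms(1) this] show ?thesis by simp
qed

lemma mat_sq_integrable_const:
  assumes "0 \<le> T"
  shows "mat_sq_integrable T (\<lambda>t. C)" "mat_sq_integral T (\<lambda>t. C) = norm C^2 * T"
  using assms by (auto simp: mat_sq_integrable_def mat_sq_integral_def)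

lemma mat_sq_integrable_shift:
  assumes V: "mat_sq_integrable T V" and T: "0 \<le> T" and lam: "cmod lam \<le> R"
  shows "mat_sq_integrable T (\<lambda>t. V t + mat (lam/2))"
    and "mat_sq_integral T (\<lambda>t. V t + mat (lam/2)) \<le> 2 * mat_sq_integral T V + R^2 * T"
proof -
  note const = mat_sq_integrable_const[OF T, of "mat (lam/2)"]
  show "mat_sq_integrable T (\<lambda>t. V t + mat (lam/2))"
    by (rule mat_sq_integrable_add(1)[OF V const(1)])
  have "2 * mat_sq_integral T (\<lambda>t. mat (lam/2)) = cmod lam^2 * T"
    unfolding const(2) by (simp add: norm_mat norm_divide power_mult_distrib power_divide)
  also have "\<dots> \<le> R^2 * T"
    using lam T by (intro mult_right_mono power_mono) auto
  finally show "mat_sq_integral T (\<lambda>t. V t + mat (lam/2)) \<le> 2 * mat_sq_integral T V + R^2 * T"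
    using mat_sq_integrable_add(2)[OF V const(1)] by linarith
qed

lemma mat_sq_integrable_mult_continuous:
  fixes Y :: "real \<Rightarrow> mat2"
  assumes "mat_sq_integrable T W" "continuous_on {0..T} Y"
  shows "(\<lambda>t. W t ** Y t) absolutely_integrable_on {0..T}"
proof -
  have "bilinear (\<lambda>(Y::mat2) (W::mat2). W ** Y)"
    using bounded_bilinear.flip[OF mat2_mult_bounded_bilinear] by (simp add: bilinear_conv_bounded_bilinear)
  then show ?thesis
    using absolutely_integrable_bounded_measurable_product[of "\<lambda>(Y::mat2) (W::mat2). W ** Y" Y "{0..T}" W]
      continuous_on_Icc_imp_measurable_bounded[OF assms(2)]
      mat_sq_integrable_absolutely_integrable[OF assms(1)]
    by simp
qed

lemma mat_sq_integrable_mult_continuous_integrable_on: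
  fixes Y :: "real \<Rightarrow> mat2"
  assumes "mat_sq_integrable T W" "continuous_on {0..T} Y" "x \<le> T"
  shows "(\<lambda>t. W t ** Y t) integrable_on {0..x}"
  using absolutely_integrable_on_subinterval[OF mat_sq_integrable_mult_continuous[OF assms(1,2)], of 0 x]
    assms(3)
  by (auto simp: absolutely_integrable_on_def)

lemma mat_sq_integrable_norm_mult_continuous:
  fixes Y :: "real \<Rightarrow> 'a::euclidean_space"
  assumes W: "mat_sq_integrable T W" and Y: "continuous_on {0..T} Y"
  shows "(\<lambda>t. norm (W t) * norm (Y t)) absolutely_integrable_on {0..T}"
proof -
  have "continuous_on {0..T} (\<lambda>t. norm (Y t))"
    using Y by (intro continuous_intros)
  from absolutely_integrable_bounded_measurable_product_real[OF
      continuous_on_Icc_imp_measurable_bounded(1)[OF this] atLeastAtMost_sets_lebesgue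
      continuous_on_Icc_imp_measurable_bounded(2)[OF this]
      absolutely_integrable_norm[OF mat_sq_integrable_absolutely_integrable[OF W]]]
  show ?thesis
    by (simp add: o_def mult.commute)
qed

lemma norm_integral_mult_le:
  fixes Y :: "real \<Rightarrow> mat2"
  assumes W: "mat_sq_integrable T W" "mat_sq_integral T W \<le> \<omega>"
    and Y: "continuous_on {0..T} Y" and x: "x \<in> {0..T}"
  shows "norm (integral {0..x} (\<lambda>t. W t ** Y t)) \<le> sqrt \<omega> * sqrt (integral {0..x} (\<lambda>t. norm (Y t)^2))"
proof -
  have sub: "{0..x} \<subseteq> {0..T}" using x by auto
  have int_WY: "(\<lambda>t. W t ** Y t) integrable_on {0..x}"
    using mat_sq_integrable_mult_continuous_integrable_on[OF W(1) Y] x by auto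
  have int_W2: "(\<lambda>t. norm (W t)^2) integrable_on {0..x}"
    using W(1) x by (auto simp: mat_sq_integrable_def intro: integrable_on_subinterval)
  have int_Y2: "(\<lambda>t. norm (Y t)^2) integrable_on {0..x}"
    using continuous_on_subset[OF Y sub] by (intro integrable_continuous_real continuous_intros)
  have int_norms: "(\<lambda>t. norm (W t) * norm (Y t)) integrable_on {0..x}"
    using absolutely_integrable_on_subinterval[OF mat_sq_integrable_norm_mult_continuous[OF W(1) Y] sub]
    by (simp add: absolutely_integrable_on_def)
  have "norm (integral {0..x} (\<lambda>t. W t ** Y t)) \<le> integral {0..x} (\<lambda>t. norm (W t) * norm (Y t))"
    using int_WY int_norms norm_mat2_mult_le by (rule integral_norm_bound_integral)
  also have "\<dots> \<le> sqrt (integral {0..x} (\<lambda>t. norm (W t)^2) * integral {0..x} (\<lambda>t. norm (Y t)^2))"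
    using Cauchy_Schwarz_integral[OF int_W2 int_Y2 int_norms] by (rule real_le_rsqrt)
  also have "\<dots> \<le> sqrt (\<omega> * integral {0..x} (\<lambda>t. norm (Y t)^2))"
  proof (intro real_sqrt_le_mono mult_right_mono)
    have "integral {0..x} (\<lambda>t. norm (W t)^2) \<le> mat_sq_integral T W"
      unfolding mat_sq_integral_def using W(1) sub int_W2
      by (intro integral_subset_le) (auto simp: mat_sq_integrable_def)
    then show "integral {0..x} (\<lambda>t. norm (W t)^2) \<le> \<omega>"
      using W(2) by linarith
    show "0 \<le> integral {0..x} (\<lambda>t. norm (Y t)^2)"
      using int_Y2 by (rule integral_nonneg) simp
  qed
  finally show ?thesis by (simp add: real_sqrt_mult)
qed

lemma norm_integral_mult_sq_le:
  fixes Y :: "real \<Rightarrow> mat2"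
  assumes "mat_sq_integrable T W" "mat_sq_integral T W \<le> \<omega>" "continuous_on {0..T} Y" "x \<in> {0..T}"
  shows "norm (integral {0..x} (\<lambda>t. W t ** Y t))^2 \<le> \<omega> * integral {0..x} (\<lambda>t. norm (Y t)^2)"
proof -
  have "norm (integral {0..x} (\<lambda>t. W t ** Y t))^2
      \<le> (sqrt \<omega> * sqrt (integral {0..x} (\<lambda>t. norm (Y t)^2)))^2"
    using norm_integral_mult_le[OF assms] by (intro power_mono) auto
  also have "\<dots> = \<omega> * integral {0..x} (\<lambda>t. norm (Y t)^2)"
    using mat_sq_integral_le_imp_nonneg[OF assms(2)] integral_norm_sq_nonneg[OF assms(3,4)]
    by (simp add: power_mult_distrib)
  finally show ?thesis .
qed

lemma norm_integral_mult_diff_le: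
  fixes Y Z :: "real \<Rightarrow> mat2"
  assumes W: "mat_sq_integrable T W" and Y: "continuous_on {0..T} Y" and Z: "continuous_on {0..T} Z"
    and close: "\<And>t. t \<in> {0..T} \<Longrightarrow> norm (Y t - Z t) \<le> e" and x: "x \<in> {0..T}"
  shows "norm (integral {0..x} (\<lambda>t. W t ** Y t) - integral {0..x} (\<lambda>t. W t ** Z t))
    \<le> sqrt (mat_sq_integral T W) * sqrt T * e"
proof -
  have xT: "x \<le> T" using x by simp
  have cont: "continuous_on {0..T} (\<lambda>t. Y t - Z t)"
    using Y Z by (intro continuous_intros)
  have diff: "integral {0..x} (\<lambda>t. W t ** Y t) - integral {0..x} (\<lambda>t. W t ** Z t)
      = integral {0..x} (\<lambda>t. W t ** (Y t - Z t))"
    unfolding mat2_mult.diff_right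
    using mat_sq_integrable_mult_continuous_integrable_on[OF W Y xT]
      mat_sq_integrable_mult_continuous_integrable_on[OF W Z xT]
    by (rule integral_diff[symmetric])
  have small: "integral {0..x} (\<lambda>t. norm (Y t - Z t)^2) \<le> T * e^2"
  proof -
    have "integral {0..x} (\<lambda>t. norm (Y t - Z t)^2) \<le> integral {0..x} (\<lambda>t. e^2)"
      using continuous_on_subset[OF Y, of "{0..x}"] continuous_on_subset[OF Z, of "{0..x}"] close xT
      by (intro integral_le integrable_continuous_real continuous_intros power_mono) auto
    also have "\<dots> \<le> T * e^2"
      using x by (auto intro: mult_right_mono)
    finally show ?thesis .
  qed
  have e: "0 \<le> e"
    using close[of 0] x by (auto intro: order_trans[OF norm_ge_zero])
  have "norm (integral {0..x} (\<lambda>t. W t ** Y t) - integral {0..x} (\<lambda>t. W t ** Z t))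
      \<le> sqrt (mat_sq_integral T W) * sqrt (integral {0..x} (\<lambda>t. norm (Y t - Z t)^2))"
    unfolding diff by (rule norm_integral_mult_le[OF W order_refl cont x])
  also have "\<dots> \<le> sqrt (mat_sq_integral T W) * sqrt (T * e^2)"
    using small mat_sq_integral_nonneg by (intro mult_left_mono real_sqrt_le_mono) auto
  also have "\<dots> = sqrt (mat_sq_integral T W) * sqrt T * e"
    using e by (simp add: real_sqrt_mult)
  finally show ?thesis .
qed

lemma tendsto_integral_mult_uniform_limit:
  fixes Y :: "nat \<Rightarrow> real \<Rightarrow> mat2"
  assumes W: "mat_sq_integrable T W"
    and Y: "\<And>n. continuous_on {0..T} (Y n)" and Z: "continuous_on {0..T} Z"
    and lim: "uniform_limit {0..T} Y Z sequentially" and x: "x \<in> {0..T}"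
  shows "(\<lambda>n. integral {0..x} (\<lambda>t. W t ** Y n t)) \<longlonglongrightarrow> integral {0..x} (\<lambda>t. W t ** Z t)"
proof (rule tendstoI)
  fix e :: real assume e: "0 < e"
  define C where "C = sqrt (mat_sq_integral T W) * sqrt T + 1"
  have C: "0 < C"
    unfolding C_def using x mat_sq_integral_nonneg by (intro add_nonneg_pos mult_nonneg_nonneg) auto
  have "\<forall>\<^sub>F n in sequentially. \<forall>t\<in>{0..T}. dist (Y n t) (Z t) < e / C"
    using uniform_limitD[OF lim divide_pos_pos[OF e C]] .
  then show "\<forall>\<^sub>F n in sequentially.
      dist (integral {0..x} (\<lambda>t. W t ** Y n t)) (integral {0..x} (\<lambda>t. W t ** Z t)) < e"
  proof eventually_elim
    case (elim n)
    have "dist (integral {0..x} (\<lambda>t. W t ** Y n t)) (integral {0..x} (\<lambda>t. W t ** Z t))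
        \<le> sqrt (mat_sq_integral T W) * sqrt T * (e / C)"
      unfolding dist_norm
      by (rule norm_integral_mult_diff_le[OF W Y Z _ x]) (use elim in \<open>auto simp: dist_norm less_imp_le\<close>)
    also have "\<dots> < C * (e / C)"
      using e C unfolding C_def by (intro mult_strict_right_mono) auto
    finally show ?case
      using C by simp
  qed
qed

section \<open>The integral equation\<close>

definition is_fundamental_solution :: "real \<Rightarrow> (real \<Rightarrow> mat2) \<Rightarrow> (real \<Rightarrow> mat2) \<Rightarrow> bool" where
  "is_fundamental_solution T W \<Psi> \<longleftrightarrow> continuous_on {0..T} \<Psi> \<and>
     (\<forall>x\<in>{0..T}. Jmat ** (\<Psi> x - mat 1) = integral {0..x} (\<lambda>t. W t ** \<Psi> t))"

lemma fundamental_solution_eq: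
  "is_fundamental_solution T W \<Psi> \<Longrightarrow> x \<in> {0..T} \<Longrightarrow>
     \<Psi> x = mat 1 - Jmat ** integral {0..x} (\<lambda>t. W t ** \<Psi> t)"
  by (simp add: is_fundamental_solution_def Jmat_mult_eq_iff)

lemma fundamental_solution_bound:
  assumes W: "mat_sq_integrable T W" "mat_sq_integral T W \<le> \<omega>"
    and \<Psi>: "is_fundamental_solution T W \<Psi>" and x: "x \<in> {0..T}"
  shows "norm (\<Psi> x)^2 \<le> 4 * exp (2 * \<omega> * T)"
proof -
  have cont: "continuous_on {0..T} \<Psi>" using \<Psi> by (simp add: is_fundamental_solution_def)
  define u where "u = (\<lambda>t. norm (\<Psi> t)^2)"
  have \<omega>: "0 \<le> \<omega>" using mat_sq_integral_le_imp_nonneg[OF W(2)] .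
  have le: "u y \<le> 4 + 2 * \<omega> * integral {0..y} u" if y: "y \<in> {0..T}" for y
  proof -
    have I: "0 \<le> integral {0..y} u"
      unfolding u_def using integral_norm_sq_nonneg[OF cont y] .
    have "norm (\<Psi> y) \<le> norm (mat 1 :: mat2) + norm (Jmat ** integral {0..y} (\<lambda>t. W t ** \<Psi> t))"
      using fundamental_solution_eq[OF \<Psi> y] by (metis norm_triangle_ineq4)
    also have "\<dots> \<le> sqrt 2 + sqrt \<omega> * sqrt (integral {0..y} u)"
      using norm_integral_mult_le[OF W cont y] by (simp add: u_def norm_mat norm_Jmat_mult)
    finally have "u y \<le> 2 * sqrt 2^2 + 2 * (sqrt \<omega> * sqrt (integral {0..y} u))^2"
      unfolding u_def by (intro sq_le_of_le_add) auto
    then show ?thesis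
      using \<omega> I by (simp add: power_mult_distrib)
  qed
  have "u x \<le> 4 * exp (2 * \<omega> * x)"
    using \<omega> unfolding u_def
    by (intro gronwall_inequality[OF _ _ _ le[unfolded u_def] x] continuous_intros cont) auto
  also have "\<dots> \<le> 4 * exp (2 * \<omega> * T)"
    using x \<omega> by (auto intro: mult_left_mono)
  finally show ?thesis unfolding u_def .
qed

lemma fundamental_solution_diff_eq:
  assumes W1: "mat_sq_integrable T W1" and W2: "mat_sq_integrable T W2"
    and \<Psi>1: "is_fundamental_solution T W1 \<Psi>1" and \<Psi>2: "is_fundamental_solution T W2 \<Psi>2"
    and y: "y \<in> {0..T}"
  shows "\<Psi>1 y - \<Psi>2 y = - (Jmat ** (integral {0..y} (\<lambda>t. W1 t ** (\<Psi>1 t - \<Psi>2 t))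
           + integral {0..y} (\<lambda>t. (W1 t - W2 t) ** \<Psi>2 t)))"
proof -
  have c1: "continuous_on {0..T} \<Psi>1" and c2: "continuous_on {0..T} \<Psi>2"
    using \<Psi>1 \<Psi>2 by (auto simp: is_fundamental_solution_def)
  have yT: "y \<le> T" using y by simp
  note int = mat_sq_integrable_mult_continuous_integrable_on[OF _ _ yT]
  have "integral {0..y} (\<lambda>t. W1 t ** (\<Psi>1 t - \<Psi>2 t)) + integral {0..y} (\<lambda>t. (W1 t - W2 t) ** \<Psi>2 t)
      = integral {0..y} (\<lambda>t. W1 t ** (\<Psi>1 t - \<Psi>2 t) + (W1 t - W2 t) ** \<Psi>2 t)"
    using int[OF W1 continuous_on_diff[OF c1 c2]] int[OF mat_sq_integrable_diff[OF W1 W2] c2]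
    by (rule integral_add[symmetric])
  also have "\<dots> = integral {0..y} (\<lambda>t. W1 t ** \<Psi>1 t - W2 t ** \<Psi>2 t)"
    by (simp add: mat2_mult.diff_left mat2_mult.diff_right)
  also have "\<dots> = integral {0..y} (\<lambda>t. W1 t ** \<Psi>1 t) - integral {0..y} (\<lambda>t. W2 t ** \<Psi>2 t)"
    using int[OF W1 c1] int[OF W2 c2] by (rule integral_diff)
  finally show ?thesis
    using fundamental_solution_eq[OF \<Psi>1 y] fundamental_solution_eq[OF \<Psi>2 y]
    by (simp add: mat2_mult.diff_right)
qed

lemma fundamental_solution_diff_sq_le:
  assumes W1: "mat_sq_integrable T W1" "mat_sq_integral T W1 \<le> \<omega>"
    and W2: "mat_sq_integrable T W2" "mat_sq_integral T W2 \<le> \<omega>"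
    and \<Psi>1: "is_fundamental_solution T W1 \<Psi>1" and \<Psi>2: "is_fundamental_solution T W2 \<Psi>2"
    and y: "y \<in> {0..T}"
  shows "norm (\<Psi>1 y - \<Psi>2 y)^2 \<le> 8 * T * exp (2 * \<omega> * T) * mat_sq_integral T (\<lambda>t. W1 t - W2 t)
    + 2 * \<omega> * integral {0..y} (\<lambda>t. norm (\<Psi>1 t - \<Psi>2 t)^2)"
proof -
  define d where "d = mat_sq_integral T (\<lambda>t. W1 t - W2 t)"
  define M where "M = 4 * exp (2 * \<omega> * T)"
  have c1: "continuous_on {0..T} \<Psi>1" and c2: "continuous_on {0..T} \<Psi>2"
    using \<Psi>1 \<Psi>2 by (auto simp: is_fundamental_solution_def)
  have d: "0 \<le> d" unfolding d_def by (rule mat_sq_integral_nonneg)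
  have I: "0 \<le> integral {0..y} (\<lambda>t. norm (\<Psi>1 t - \<Psi>2 t)^2)"
    using integral_norm_sq_nonneg[OF continuous_on_diff[OF c1 c2] y] .
  have I2: "integral {0..y} (\<lambda>t. norm (\<Psi>2 t)^2) \<le> T * M"
  proof -
    have "integral {0..y} (\<lambda>t. norm (\<Psi>2 t)^2) \<le> integral {0..y} (\<lambda>t. M)"
      using fundamental_solution_bound[OF W2 \<Psi>2] y continuous_on_subset[OF c2, of "{0..y}"]
      unfolding M_def by (intro integral_le integrable_continuous_real continuous_intros) auto
    also have "\<dots> \<le> T * M"
      using y by (auto simp: M_def intro: mult_right_mono)
    finally show ?thesis .
  qed
  have "norm (\<Psi>1 y - \<Psi>2 y) \<le> norm (integral {0..y} (\<lambda>t. W1 t ** (\<Psi>1 t - \<Psi>2 t)))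
      + norm (integral {0..y} (\<lambda>t. (W1 t - W2 t) ** \<Psi>2 t))"
    unfolding fundamental_solution_diff_eq[OF W1(1) W2(1) \<Psi>1 \<Psi>2 y] norm_minus_cancel norm_Jmat_mult
    by (rule norm_triangle_ineq)
  also have "\<dots> \<le> sqrt \<omega> * sqrt (integral {0..y} (\<lambda>t. norm (\<Psi>1 t - \<Psi>2 t)^2)) + sqrt d * sqrt (T * M)"
  proof (rule add_mono)
    show "norm (integral {0..y} (\<lambda>t. W1 t ** (\<Psi>1 t - \<Psi>2 t)))
        \<le> sqrt \<omega> * sqrt (integral {0..y} (\<lambda>t. norm (\<Psi>1 t - \<Psi>2 t)^2))"
      by (rule norm_integral_mult_le[OF W1 continuous_on_diff[OF c1 c2] y])
    have "norm (integral {0..y} (\<lambda>t. (W1 t - W2 t) ** \<Psi>2 t))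
        \<le> sqrt d * sqrt (integral {0..y} (\<lambda>t. norm (\<Psi>2 t)^2))"
      unfolding d_def by (rule norm_integral_mult_le[OF mat_sq_integrable_diff[OF W1(1) W2(1)] order_refl c2 y])
    also have "\<dots> \<le> sqrt d * sqrt (T * M)"
      using I2 d by (intro mult_left_mono real_sqrt_le_mono) auto
    finally show "norm (integral {0..y} (\<lambda>t. (W1 t - W2 t) ** \<Psi>2 t)) \<le> sqrt d * sqrt (T * M)" .
  qed
  finally have "norm (\<Psi>1 y - \<Psi>2 y)^2 \<le> 2 * (sqrt \<omega> * sqrt (integral {0..y} (\<lambda>t. norm (\<Psi>1 t - \<Psi>2 t)^2)))^2
      + 2 * (sqrt d * sqrt (T * M))^2"
    by (intro sq_le_of_le_add) auto
  then show ?thesis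
    using mat_sq_integral_le_imp_nonneg[OF W1(2)] I d y
    by (simp add: power_mult_distrib M_def d_def algebra_simps)
qed

lemma fundamental_solution_stability:
  assumes W1: "mat_sq_integrable T W1" "mat_sq_integral T W1 \<le> \<omega>"
    and W2: "mat_sq_integrable T W2" "mat_sq_integral T W2 \<le> \<omega>"
    and \<Psi>1: "is_fundamental_solution T W1 \<Psi>1" and \<Psi>2: "is_fundamental_solution T W2 \<Psi>2"
    and x: "x \<in> {0..T}"
  shows "norm (\<Psi>1 x - \<Psi>2 x)^2 \<le> 8 * T * exp (4 * \<omega> * T) * mat_sq_integral T (\<lambda>t. W1 t - W2 t)"
proof -
  define a where "a = 8 * T * exp (2 * \<omega> * T) * mat_sq_integral T (\<lambda>t. W1 t - W2 t)"
  have \<omega>: "0 \<le> \<omega>" using mat_sq_integral_le_imp_nonneg[OF W1(2)] .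
  have a: "0 \<le> a" unfolding a_def using x mat_sq_integral_nonneg by simp
  have "norm (\<Psi>1 x - \<Psi>2 x)^2 \<le> a * exp (2 * \<omega> * x)"
    using \<Psi>1 \<Psi>2 \<omega> a unfolding is_fundamental_solution_def
    by (intro gronwall_inequality[OF _ _ _ fundamental_solution_diff_sq_le[OF W1 W2 \<Psi>1 \<Psi>2, folded a_def] x]
        continuous_intros) auto
  also have "\<dots> \<le> a * exp (2 * \<omega> * T)"
    using x \<omega> a by (auto intro!: mult_left_mono)
  also have "\<dots> = 8 * T * exp (4 * \<omega> * T) * mat_sq_integral T (\<lambda>t. W1 t - W2 t)"
    by (simp add: a_def flip: exp_add)
  finally show ?thesis .
qed

lemma fundamental_solution_unique:
  assumes "mat_sq_integrable T W" "is_fundamental_solution T W \<Psi>1" "is_fundamental_solution T W \<Psi>2"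
    and "x \<in> {0..T}"
  shows "\<Psi>1 x = \<Psi>2 x"
  using fundamental_solution_stability[OF assms(1) order_refl assms(1) order_refl assms(2-4)]
  by (simp add: mat_sq_integral_def)

section \<open>Picard iteration\<close>

primrec picard :: "(real \<Rightarrow> mat2) \<Rightarrow> nat \<Rightarrow> real \<Rightarrow> mat2" where
  "picard W 0 x = mat 1"
| "picard W (Suc n) x = mat 1 - Jmat ** integral {0..x} (\<lambda>t. W t ** picard W n t)"

definition fundamental_matrix :: "(real \<Rightarrow> mat2) \<Rightarrow> real \<Rightarrow> mat2" where
  "fundamental_matrix W x = lim (\<lambda>n. picard W n x)"

lemma continuous_on_picard:
  assumes "mat_sq_integrable T W"
  shows "continuous_on {0..T} (picard W n)"
proof (induction n)
  case (Suc n)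
  have "(\<lambda>t. W t ** picard W n t) integrable_on {0..T}"
    using mat_sq_integrable_mult_continuous_integrable_on[OF assms Suc order_refl] .
  then show ?case
    by (simp only: picard.simps)
      (intro continuous_intros mat2_mult.bounded_linear_right[THEN bounded_linear.continuous_on]
        indefinite_integral_continuous_1)
qed simp

lemma picard_Suc_Suc_diff:
  assumes "mat_sq_integrable T W" "x \<in> {0..T}"
  shows "picard W (Suc (Suc n)) x - picard W (Suc n) x
    = - (Jmat ** integral {0..x} (\<lambda>t. W t ** (picard W (Suc n) t - picard W n t)))"
proof -
  have "x \<le> T" using assms(2) by simp
  note int = mat_sq_integrable_mult_continuous_integrable_on[OF assms(1) continuous_on_picard[OF assms(1)] this]
  have "integral {0..x} (\<lambda>t. W t ** (picard W (Suc n) t - picard W n t))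
      = integral {0..x} (\<lambda>t. W t ** picard W (Suc n) t) - integral {0..x} (\<lambda>t. W t ** picard W n t)"
    unfolding mat2_mult.diff_right using int int by (rule integral_diff)
  then show ?thesis
    by (simp add: mat2_mult.diff_right)
qed

lemma picard_step_bound:
  assumes W: "mat_sq_integrable T W" "mat_sq_integral T W \<le> \<omega>" and x: "x \<in> {0..T}"
  shows "norm (picard W (Suc n) x - picard W n x)^2 \<le> 2 * (\<omega> * x)^Suc n / fact (Suc n)"
  using x
proof (induction n arbitrary: x)
  case 0
  have "norm (picard W (Suc 0) x - picard W 0 x)^2 = norm (integral {0..x} (\<lambda>t. W t ** mat 1))^2"
    by (simp add: norm_Jmat_mult)
  also have "\<dots> \<le> \<omega> * integral {0..x} (\<lambda>t. norm (mat 1 :: mat2)^2)"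
    by (rule norm_integral_mult_sq_le[OF W continuous_on_const 0])
  finally show ?case
    using 0 by (simp add: norm_mat mult_ac)
next
  case (Suc n)
  have x0: "0 \<le> x" and xT: "x \<le> T" using Suc.prems by simp_all
  define E where "E = (\<lambda>t. picard W (Suc n) t - picard W n t)"
  have cont_E: "continuous_on {0..T} E"
    unfolding E_def by (intro continuous_intros continuous_on_picard[OF W(1)])
  have "norm (picard W (Suc (Suc n)) x - picard W (Suc n) x)^2 = norm (integral {0..x} (\<lambda>t. W t ** E t))^2"
    by (simp only: picard_Suc_Suc_diff[OF W(1) Suc.prems] norm_minus_cancel norm_Jmat_mult E_def)
  also have "\<dots> \<le> \<omega> * integral {0..x} (\<lambda>t. norm (E t)^2)"
    by (rule norm_integral_mult_sq_le[OF W cont_E Suc.prems])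
  also have "\<dots> \<le> \<omega> * integral {0..x} (\<lambda>t. 2 * \<omega>^Suc n / fact (Suc n) * t^Suc n)"
  proof (intro mult_left_mono integral_le mat_sq_integral_le_imp_nonneg[OF W(2)])
    show "(\<lambda>t. norm (E t)^2) integrable_on {0..x}"
      using continuous_on_subset[OF cont_E, of "{0..x}"] xT
      by (intro integrable_continuous_real continuous_intros) auto
    show "(\<lambda>t. 2 * \<omega>^Suc n / fact (Suc n) * t^Suc n) integrable_on {0..x}"
      by (intro integrable_continuous_real continuous_intros)
    show "norm (E t)^2 \<le> 2 * \<omega>^Suc n / fact (Suc n) * t^Suc n" if "t \<in> {0..x}" for t
    proof -
      have "norm (E t)^2 \<le> 2 * (\<omega> * t)^Suc n / fact (Suc n)"
        using Suc.IH[of t] that xT unfolding E_def by simp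
      also have "\<dots> = 2 * \<omega>^Suc n / fact (Suc n) * t^Suc n"
        by (simp only: power_mult_distrib times_divide_eq_left mult.assoc mult.commute[of "t^Suc n"])
      finally show ?thesis .
    qed
  qed
  also have "\<dots> = \<omega> * (2 * \<omega>^Suc n / fact (Suc n) * integral {0..x} (\<lambda>t. t^Suc n))"
    by (simp only: integral_mult_right)
  also have "\<dots> = 2 * (\<omega> * x)^Suc (Suc n) / fact (Suc (Suc n))"
    unfolding integral_power_interval[OF x0]
    by (simp add: power_mult_distrib field_simps)
  finally show ?case .
qed

lemma norm_picard_step_le:
  assumes "mat_sq_integrable T W" "mat_sq_integral T W \<le> \<omega>" "x \<in> {0..T}"
  shows "norm (picard W (Suc n) x - picard W n x) \<le> sqrt 2 * sqrt ((\<omega> * T)^Suc n / fact (Suc n))"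
proof -
  have "(\<omega> * x)^Suc n \<le> (\<omega> * T)^Suc n"
    using assms(3) mat_sq_integral_le_imp_nonneg[OF assms(2)] by (intro power_mono mult_left_mono) auto
  then have "2 * (\<omega> * x)^Suc n / fact (Suc n) \<le> 2 * ((\<omega> * T)^Suc n / fact (Suc n))"
    by (simp add: divide_right_mono)
  with picard_step_bound[OF assms, of n]
  have "norm (picard W (Suc n) x - picard W n x) \<le> sqrt (2 * ((\<omega> * T)^Suc n / fact (Suc n)))"
    by (intro real_le_rsqrt) simp
  then show ?thesis by (simp only: real_sqrt_mult)
qed

lemma picard_uniform_limit:
  assumes "\<And>p. p \<in> P \<Longrightarrow> mat_sq_integrable T (W p)" "\<And>p. p \<in> P \<Longrightarrow> mat_sq_integral T (W p) \<le> \<omega>"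
    and "0 \<le> \<omega>" "0 \<le> T"
  shows "uniform_limit (P \<times> {0..T}) (\<lambda>n z. picard (W (fst z)) n (snd z))
      (\<lambda>z. fundamental_matrix (W (fst z)) (snd z)) sequentially"
proof -
  let ?d = "\<lambda>n z. picard (W (fst z)) (Suc n) (snd z) - picard (W (fst z)) n (snd z)"
  have "uniform_limit (P \<times> {0..T}) (\<lambda>n z. \<Sum>i<n. ?d i z) (\<lambda>z. \<Sum>i. ?d i z) sequentially"
  proof (rule Weierstrass_m_test)
    show "summable (\<lambda>n. sqrt 2 * sqrt ((\<omega> * T)^Suc n / fact (Suc n)))"
      using summable_Suc_iff[THEN iffD2, OF summable_sqrt_exp_series[of "\<omega> * T"]] assms(3,4)
      by (intro summable_mult) (simp add: zero_le_mult_iff)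
    show "norm (?d n z) \<le> sqrt 2 * sqrt ((\<omega> * T)^Suc n / fact (Suc n))" if "z \<in> P \<times> {0..T}" for n z
      using that by (intro norm_picard_step_le assms) auto
  qed
  then have "uniform_limit (P \<times> {0..T}) (\<lambda>n z. mat 1 + (\<Sum>i<n. ?d i z))
      (\<lambda>z. mat 1 + (\<Sum>i. ?d i z)) sequentially"
    by (rule uniform_limit_add[OF uniform_limit_const])
  moreover have "mat 1 + (\<Sum>i<n. ?d i z) = picard (W (fst z)) n (snd z)" for n z
    using sum_lessThan_telescope[of "\<lambda>i. picard (W (fst z)) i (snd z)" n] by simp
  ultimately have lim: "uniform_limit (P \<times> {0..T}) (\<lambda>n z. picard (W (fst z)) n (snd z))
      (\<lambda>z. mat 1 + (\<Sum>i. ?d i z)) sequentially"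
    by (simp only:)
  moreover have "mat 1 + (\<Sum>i. ?d i z) = fundamental_matrix (W (fst z)) (snd z)"
    if "z \<in> P \<times> {0..T}" for z
    unfolding fundamental_matrix_def using tendsto_uniform_limitI[OF lim that] by (rule limI[symmetric])
  ultimately show ?thesis
    using uniform_limit_cong'[where f = "\<lambda>n z. picard (W (fst z)) n (snd z)"
        and g = "\<lambda>n z. picard (W (fst z)) n (snd z)" and h = "\<lambda>z. mat 1 + (\<Sum>i. ?d i z)"
        and i = "\<lambda>z. fundamental_matrix (W (fst z)) (snd z)"] by blast
qed

lemma picard_uniform_limit_interval:
  assumes "mat_sq_integrable T W" "0 \<le> T"
  shows "uniform_limit {0..T} (picard W) (fundamental_matrix W) sequentially"
proof -
  have "uniform_limit ({()} \<times> {0..T}) (\<lambda>n z. picard W n (snd z)) (\<lambda>z. fundamental_matrix W (snd z))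
      sequentially"
    using picard_uniform_limit[of "{()}" T "\<lambda>_. W" "mat_sq_integral T W"] assms
    by (simp add: mat_sq_integral_nonneg)
  from uniform_limit_compose'[OF this, of "\<lambda>x. ((), x)" "{0..T}"] show ?thesis
    by auto
qed

lemma continuous_on_fundamental_matrix:
  assumes "mat_sq_integrable T W" "0 \<le> T"
  shows "continuous_on {0..T} (fundamental_matrix W)"
  using picard_uniform_limit_interval[OF assms] continuous_on_picard[OF assms(1)]
  by (intro uniform_limit_theorem[of _ "picard W"]) auto

lemma fundamental_matrix_solves:
  assumes W: "mat_sq_integrable T W" and T: "0 \<le> T"
  shows "is_fundamental_solution T W (fundamental_matrix W)"
  unfolding is_fundamental_solution_def
proof (intro conjI ballI continuous_on_fundamental_matrix[OF W T])
  fix x assume x: "x \<in> {0..T}"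
  note lim = picard_uniform_limit_interval[OF W T]
  have "(\<lambda>n. picard W (Suc n) x) \<longlonglongrightarrow> fundamental_matrix W x"
    using LIMSEQ_Suc[OF tendsto_uniform_limitI[OF lim x]] .
  moreover have "(\<lambda>n. picard W (Suc n) x)
      \<longlonglongrightarrow> mat 1 - Jmat ** integral {0..x} (\<lambda>t. W t ** fundamental_matrix W t)"
    unfolding picard.simps
    by (intro tendsto_intros mat2_mult.tendsto tendsto_integral_mult_uniform_limit[OF W _ _ lim x]
        continuous_on_picard[OF W] continuous_on_fundamental_matrix[OF W T])
  ultimately have "fundamental_matrix W x = mat 1 - Jmat ** integral {0..x} (\<lambda>t. W t ** fundamental_matrix W t)"
    by (rule LIMSEQ_unique)
  then show "Jmat ** (fundamental_matrix W x - mat 1) = integral {0..x} (\<lambda>t. W t ** fundamental_matrix W t)"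
    by (rule Jmat_mult_eq_iff[THEN iffD2])
qed

section \<open>Dependence on the spectral parameter\<close>

(* picard_coeff V n k is the coefficient of lam^k in picard (\<lambda>t. V t + mat (lam/2)) n. *)
primrec picard_coeff :: "(real \<Rightarrow> mat2) \<Rightarrow> nat \<Rightarrow> nat \<Rightarrow> real \<Rightarrow> mat2" where
  "picard_coeff V 0 k x = (if k = 0 then mat 1 else 0)"
| "picard_coeff V (Suc n) k x = (if k = 0 then mat 1 else 0) - Jmat ** integral {0..x}
      (\<lambda>t. V t ** picard_coeff V n k t + (if k = 0 then 0 else mat (1/2) ** picard_coeff V n (k - 1) t))"

lemma picard_coeff_eq_0: "n < k \<Longrightarrow> picard_coeff V n k x = 0"
proof (induction n arbitrary: k x)
  case (Suc n)
  then have "picard_coeff V n k = (\<lambda>_. 0)" "picard_coeff V n (k - 1) = (\<lambda>_. 0)"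
    by auto
  with Suc.prems show ?case by simp
qed simp

lemma integrable_picard_coeff_integrand:
  assumes V: "mat_sq_integrable T V" and C: "\<And>j. continuous_on {0..T} (picard_coeff V n j)"
    and x: "x \<le> T"
  shows "(\<lambda>t. V t ** picard_coeff V n k t + (if k = 0 then 0 else mat (1/2) ** picard_coeff V n (k - 1) t))
      integrable_on {0..x}"
proof -
  have "continuous_on {0..x} (\<lambda>t. if k = 0 then 0 else mat (1/2) ** picard_coeff V n (k - 1) t)"
    using continuous_on_subset[OF C, of "{0..x}" "k - 1"] x
    by (cases "k = 0") (auto intro: mat2_mult.bounded_linear_right[THEN bounded_linear.continuous_on])
  then show ?thesis
    by (rule integrable_add[OF mat_sq_integrable_mult_continuous_integrable_on[OF V C x]
          integrable_continuous_real])
qed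

lemma continuous_on_picard_coeff:
  assumes "mat_sq_integrable T V"
  shows "continuous_on {0..T} (picard_coeff V n k)"
proof (induction n arbitrary: k)
  case (Suc n)
  show ?case
    using integrable_picard_coeff_integrand[OF assms Suc order_refl]
    by (simp only: picard_coeff.simps)
      (intro continuous_intros mat2_mult.bounded_linear_right[THEN bounded_linear.continuous_on]
        indefinite_integral_continuous_1)
qed simp

lemma mat_shift_mult_mat_pow:
  "(V + mat (lam/2)) ** (mat (lam^k) ** X)
    = mat (lam^k) ** (V ** X) + mat (lam^Suc k) ** (mat (1/2) ** (X::mat2))"
proof -
  have "V ** (mat (lam^k) ** X) = mat (lam^k) ** (V ** X)"
    by (simp add: matrix_mul_assoc mat_mult_commute)
  moreover have "mat (lam/2) ** (mat (lam^k) ** X) = mat (lam^Suc k) ** (mat (1/2) ** X)"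
    by (simp add: matrix_mul_assoc mat_mult_mat)
  ultimately show ?thesis
    by (simp add: mat2_mult.add_left)
qed

lemma mat_shift_mult_poly:
  fixes V :: mat2 and C :: "nat \<Rightarrow> mat2"
  assumes "C (Suc n) = 0"
  shows "(V + mat (lam/2)) ** (\<Sum>k\<le>n. mat (lam^k) ** C k)
    = (\<Sum>k\<le>Suc n. mat (lam^k) ** (V ** C k + (if k = 0 then 0 else mat (1/2) ** C (k - 1))))"
proof -
  have "(V + mat (lam/2)) ** (\<Sum>k\<le>n. mat (lam^k) ** C k)
      = (\<Sum>k\<le>n. mat (lam^k) ** (V ** C k)) + (\<Sum>k\<le>n. mat (lam^Suc k) ** (mat (1/2) ** C k))"
    by (simp only: mat2_mult.sum_right mat_shift_mult_mat_pow sum.distrib)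
  also have "(\<Sum>k\<le>n. mat (lam^k) ** (V ** C k)) = (\<Sum>k\<le>Suc n. mat (lam^k) ** (V ** C k))"
    using assms by simp
  also have "(\<Sum>k\<le>n. mat (lam^Suc k) ** (mat (1/2) ** C k))
      = (\<Sum>k\<le>Suc n. mat (lam^k) ** (if k = 0 then 0 else mat (1/2) ** C (k - 1)))"
    by (simp only: sum.atMost_Suc_shift) simp
  finally show ?thesis
    by (simp only: sum.distrib mat2_mult.add_right)
qed

lemma integral_mat_poly:
  fixes G :: "nat \<Rightarrow> real \<Rightarrow> mat2"
  assumes "\<And>k. G k integrable_on S"
  shows "integral S (\<lambda>t. \<Sum>k\<le>m. mat (lam^k) ** G k t) = (\<Sum>k\<le>m. mat (lam^k) ** integral S (G k))"
  using assms by (simp add: integral_sum integrable_mat_mult_left integral_mat_mult_left)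

lemma one_minus_Jmat_mult_mat_poly:
  "mat 1 - Jmat ** (\<Sum>k\<le>m. mat (lam^k) ** Y k)
    = (\<Sum>k\<le>m. mat (lam^k) ** ((if k = 0 then mat 1 else 0) - Jmat ** (Y k :: mat2)))"
proof -
  have "(\<Sum>k\<le>m. mat (lam^k) ** (if k = 0 then mat 1 else 0)) = (mat 1 :: mat2)"
    by (simp add: if_distrib[of "\<lambda>X. mat _ ** X"] cong: if_cong)
  moreover have "Jmat ** (mat c ** Y k) = mat c ** (Jmat ** Y k)" for c k
    by (simp add: matrix_mul_assoc mat_mult_commute)
  ultimately show ?thesis
    by (simp add: mat2_mult.diff_right mat2_mult.sum_right sum_subtractf)
qed

lemma picard_polynomial:
  assumes V: "mat_sq_integrable T V" and x: "x \<in> {0..T}"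
  shows "picard (\<lambda>t. V t + mat (lam/2)) n x = (\<Sum>k\<le>n. mat (lam^k) ** picard_coeff V n k x)"
  using x
proof (induction n arbitrary: x)
  case (Suc n)
  define G where "G = (\<lambda>k t. V t ** picard_coeff V n k t
      + (if k = 0 then 0 else mat (1/2) ** picard_coeff V n (k - 1) t))"
  have xT: "x \<le> T" using Suc.prems by simp
  have "integral {0..x} (\<lambda>t. (V t + mat (lam/2)) ** picard (\<lambda>t. V t + mat (lam/2)) n t)
      = integral {0..x} (\<lambda>t. \<Sum>k\<le>Suc n. mat (lam^k) ** G k t)"
  proof (rule integral_cong)
    fix t assume "t \<in> {0..x}"
    then have "picard (\<lambda>t. V t + mat (lam/2)) n t = (\<Sum>k\<le>n. mat (lam^k) ** picard_coeff V n k t)"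
      using Suc.IH xT by simp
    then show "(V t + mat (lam/2)) ** picard (\<lambda>t. V t + mat (lam/2)) n t
        = (\<Sum>k\<le>Suc n. mat (lam^k) ** G k t)"
      by (simp add: G_def mat_shift_mult_poly picard_coeff_eq_0)
  qed
  also have "\<dots> = (\<Sum>k\<le>Suc n. mat (lam^k) ** integral {0..x} (G k))"
    unfolding G_def
    by (rule integral_mat_poly[OF integrable_picard_coeff_integrand[OF V continuous_on_picard_coeff[OF V] xT]])
  finally have "picard (\<lambda>t. V t + mat (lam/2)) (Suc n) x
      = mat 1 - Jmat ** (\<Sum>k\<le>Suc n. mat (lam^k) ** integral {0..x} (G k))"
    by (simp only: picard.simps)
  also have "\<dots> = (\<Sum>k\<le>Suc n. mat (lam^k) ** ((if k = 0 then mat 1 else 0) - Jmat ** integral {0..x} (G k)))"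
    by (rule one_minus_Jmat_mult_mat_poly)
  finally show ?case
    by (simp only: picard_coeff.simps G_def)
qed simp

lemma trace_picard_entire:
  assumes "mat_sq_integrable T V" "x \<in> {0..T}"
  shows "(\<lambda>lam. trace (picard (\<lambda>t. V t + mat (lam/2)) n x)) holomorphic_on UNIV"
proof -
  have "(\<lambda>lam. trace (picard (\<lambda>t. V t + mat (lam/2)) n x))
      = (\<lambda>lam. \<Sum>k\<le>n. lam^k * trace (picard_coeff V n k x))"
    using picard_polynomial[OF assms] by (simp add: trace_sum trace_mat_mult)
  then show ?thesis by (simp add: holomorphic_intros)
qed

lemma trace_fundamental_matrix_entire:
  assumes V: "mat_sq_integrable T V" and x: "x \<in> {0..T}"
  shows "(\<lambda>lam. trace (fundamental_matrix (\<lambda>t. V t + mat (lam/2)) x)) holomorphic_on UNIV"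
proof -
  have T: "0 \<le> T" using x by simp
  have "(\<lambda>lam. trace (fundamental_matrix (\<lambda>t. V t + mat (lam/2)) x)) holomorphic_on ball 0 R" for R
  proof -
    have "uniform_limit (cball 0 R \<times> {0..T}) (\<lambda>n z. picard (\<lambda>t. V t + mat (fst z / 2)) n (snd z))
        (\<lambda>z. fundamental_matrix (\<lambda>t. V t + mat (fst z / 2)) (snd z)) sequentially"
      using mat_sq_integrable_shift[OF V T] mat_sq_integral_nonneg[of T V] T
      by (intro picard_uniform_limit[where \<omega> = "2 * mat_sq_integral T V + R^2 * T"]) auto
    from uniform_limit_compose'[OF this, of "\<lambda>lam. (lam, x)" "cball 0 R"]
    have "uniform_limit (cball 0 R) (\<lambda>n lam. picard (\<lambda>t. V t + mat (lam/2)) n x)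
        (\<lambda>lam. fundamental_matrix (\<lambda>t. V t + mat (lam/2)) x) sequentially"
      using x by auto
    from bounded_linear.uniform_limit[OF bounded_linear_trace this]
    have lim: "uniform_limit (cball 0 R) (\<lambda>n lam. trace (picard (\<lambda>t. V t + mat (lam/2)) n x))
        (\<lambda>lam. trace (fundamental_matrix (\<lambda>t. V t + mat (lam/2)) x)) sequentially" .
    have "\<forall>\<^sub>F n in sequentially.
        continuous_on (cball 0 R) (\<lambda>lam. trace (picard (\<lambda>t. V t + mat (lam/2)) n x)) \<and>
        (\<lambda>lam. trace (picard (\<lambda>t. V t + mat (lam/2)) n x)) holomorphic_on ball 0 R"
      using trace_picard_entire[OF V x]
      by (intro always_eventually allI conjI holomorphic_on_imp_continuous_on)
        (auto intro: holomorphic_on_subset)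
    from holomorphic_uniform_limit[OF this lim trivial_limit_sequentially] show ?thesis .
  qed
  then have "(\<lambda>lam. trace (fundamental_matrix (\<lambda>t. V t + mat (lam/2)) x)) holomorphic_on (\<Union>R. ball 0 R)"
    by (intro holomorphic_on_UN_open) auto
  moreover have "z \<in> (\<Union>R. ball 0 R)" for z :: complex
    by (rule UN_I[of "norm z + 1"]) auto
  then have "(\<Union>R. ball (0::complex) R) = UNIV"
    by blast
  ultimately show ?thesis by simp
qed

section \<open>The discriminant\<close>

definition potential_matrix :: "complex \<Rightarrow> mat2" where
  "potential_matrix z = vector [vector [of_real (Im z), - of_real (Re z)],
                                vector [- of_real (Re z), - of_real (Im z)]]"

lemma Vmat_eq_potential_matrix: "Vmat \<phi> x = potential_matrix (\<phi> x)"
  by (simp add: Vmat_def potential_matrix_def Let_def)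

lemma potential_matrix_nth:
  "potential_matrix z $1$1 = of_real (Im z)" "potential_matrix z $1$2 = - of_real (Re z)"
  "potential_matrix z $2$1 = - of_real (Re z)" "potential_matrix z $2$2 = - of_real (Im z)"
  by (simp_all add: potential_matrix_def)

lemma potential_matrix_diff: "potential_matrix (a - b) = potential_matrix a - potential_matrix b"
  by (simp add: mat2_eq_iff potential_matrix_nth)

lemma norm_potential_matrix: "norm (potential_matrix z) = sqrt 2 * cmod z"
proof -
  have "norm (potential_matrix z)^2 = (sqrt 2 * cmod z)^2"
    by (simp add: norm_mat2_sq potential_matrix_nth power_mult_distrib cmod_power2)
  then show ?thesis
    using power2_eq_imp_eq[OF _ norm_ge_zero] by simp
qed

lemma continuous_potential_matrix: "continuous_on UNIV potential_matrix"
proof -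
  have "linear potential_matrix"
    by (rule linearI) (simp_all add: mat2_eq_iff potential_matrix_nth, simp add: scaleR_conv_of_real)
  then show ?thesis
    by (rule linear_continuous_on[OF linear_conv_bounded_linear[THEN iffD1]])
qed

lemma Vmat_diff: "Vmat \<phi> t - Vmat \<psi> t = Vmat (\<lambda>x. \<phi> x - \<psi> x) t"
  by (simp add: Vmat_eq_potential_matrix potential_matrix_diff)

lemma L2norm_sq_eq: "2 * pi * L2norm \<phi>^2 = integral\<^sup>L (lebesgue_on {0..2*pi}) (\<lambda>x. cmod (\<phi> x)^2)"
proof -
  have "0 \<le> integral\<^sup>L (lebesgue_on {0..2*pi}) (\<lambda>x. cmod (\<phi> x)^2)"
    by (rule Bochner_Integration.integral_nonneg) simp
  then show ?thesis by (simp add: L2norm_def)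
qed

lemma L2T_has_integral:
  assumes "L2T \<phi>"
  shows "((\<lambda>x. cmod (\<phi> x)^2) has_integral 2 * pi * L2norm \<phi>^2) {0..2*pi}"
  using assms unfolding L2norm_sq_eq L2T_def
  by (intro has_integral_integral_lebesgue_on atLeastAtMost_sets_lebesgue) auto

lemma L2T_diff: "L2T \<phi> \<Longrightarrow> L2T \<psi> \<Longrightarrow> L2T (\<lambda>x. \<phi> x - \<psi> x)"
  unfolding L2T_def
proof (intro conjI; elim conjE)
  assume \<phi>: "\<phi> \<in> borel_measurable (lebesgue_on {0..2*pi})"
    "integrable (lebesgue_on {0..2*pi}) (\<lambda>x. cmod (\<phi> x)^2)"
    and \<psi>: "\<psi> \<in> borel_measurable (lebesgue_on {0..2*pi})"
    "integrable (lebesgue_on {0..2*pi}) (\<lambda>x. cmod (\<psi> x)^2)"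
  show "(\<lambda>x. \<phi> x - \<psi> x) \<in> borel_measurable (lebesgue_on {0..2*pi})"
    using \<phi> \<psi> by measurable
  show "integrable (lebesgue_on {0..2*pi}) (\<lambda>x. cmod (\<phi> x - \<psi> x)^2)"
  proof (rule Bochner_Integration.integrable_bound)
    show "integrable (lebesgue_on {0..2*pi}) (\<lambda>x. 2 * cmod (\<phi> x)^2 + 2 * cmod (- \<psi> x)^2)"
      using \<phi> \<psi> by simp
    show "(\<lambda>x. cmod (\<phi> x - \<psi> x)^2) \<in> borel_measurable (lebesgue_on {0..2*pi})"
      using \<phi> \<psi> by measurable
    show "AE x in lebesgue_on {0..2*pi}. norm (cmod (\<phi> x - \<psi> x)^2) \<le> norm (2 * cmod (\<phi> x)^2 + 2 * cmod (- \<psi> x)^2)"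
      using norm_add_sq_le[of "\<phi> _" "- \<psi> _"] by simp
  qed
qed

lemma L2norm_sq_le_diff:
  assumes "L2T \<phi>" "L2T \<psi>"
  shows "L2norm \<psi>^2 \<le> 2 * L2norm \<phi>^2 + 2 * L2norm (\<lambda>x. \<psi> x - \<phi> x)^2"
proof -
  have "2 * pi * L2norm \<psi>^2 \<le> 2 * (2 * pi * L2norm \<phi>^2) + 2 * (2 * pi * L2norm (\<lambda>x. \<psi> x - \<phi> x)^2)"
    using L2T_has_integral[OF assms(2)]
      has_integral_add[OF has_integral_mult_right[OF L2T_has_integral[OF assms(1)]]
        has_integral_mult_right[OF L2T_has_integral[OF L2T_diff[OF assms(2,1)]]]]
  proof (rule has_integral_le)
    show "cmod (\<psi> x)^2 \<le> 2 * cmod (\<phi> x)^2 + 2 * cmod (\<psi> x - \<phi> x)^2" for x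
      using norm_add_sq_le[of "\<phi> x" "\<psi> x - \<phi> x"] by simp
  qed
  then have "2 * pi * L2norm \<psi>^2 \<le> 2 * pi * (2 * L2norm \<phi>^2 + 2 * L2norm (\<lambda>x. \<psi> x - \<phi> x)^2)"
    by (simp add: algebra_simps)
  then show ?thesis by simp
qed

lemma Omega_D:
  assumes "\<phi> \<in> Omega N"
  shows "L2T \<phi>" "L2norm \<phi>^2 \<le> N"
proof -
  show "L2T \<phi>" using assms by (simp add: Omega_def)
  have "2 * pi * L2norm \<phi>^2 \<le> 2 * pi * N"
    using assms unfolding Omega_def L2norm_sq_eq[symmetric] by simp
  then show "L2norm \<phi>^2 \<le> N" by simp
qed

lemma L2T_mat_sq_integrable:
  assumes "L2T \<phi>"
  shows "mat_sq_integrable (2*pi) (Vmat \<phi>)" "mat_sq_integral (2*pi) (Vmat \<phi>) = 4 * pi * L2norm \<phi>^2"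
proof -
  have sq: "norm (Vmat \<phi> t)^2 = 2 * cmod (\<phi> t)^2" for t
    by (simp add: Vmat_eq_potential_matrix norm_potential_matrix power_mult_distrib)
  have "potential_matrix \<in> borel_measurable borel"
    using continuous_potential_matrix by (rule borel_measurable_continuous_onI)
  with assms have "(\<lambda>x. potential_matrix (\<phi> x)) \<in> borel_measurable (lebesgue_on {0..2*pi})"
    unfolding L2T_def by (auto intro: measurable_compose)
  then have meas: "Vmat \<phi> \<in> borel_measurable (lebesgue_on {0..2*pi})"
    by (simp add: Vmat_eq_potential_matrix[abs_def])
  have "((\<lambda>t. norm (Vmat \<phi> t)^2) has_integral 4 * pi * L2norm \<phi>^2) {0..2*pi}"
    unfolding sq using has_integral_mult_right[OF L2T_has_integral[OF assms], of 2]
    by (simp add: mult.assoc)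
  then show "mat_sq_integrable (2*pi) (Vmat \<phi>)" "mat_sq_integral (2*pi) (Vmat \<phi>) = 4 * pi * L2norm \<phi>^2"
    using meas by (auto simp: mat_sq_integrable_def mat_sq_integral_def integral_unique)
qed

lemma L2T_shift_mat_sq_integrable:
  assumes "L2T \<phi>" "cmod lam \<le> R"
  shows "mat_sq_integrable (2*pi) (\<lambda>t. Vmat \<phi> t + mat (lam/2))"
    and "mat_sq_integral (2*pi) (\<lambda>t. Vmat \<phi> t + mat (lam/2)) \<le> 8 * pi * L2norm \<phi>^2 + 2 * pi * R^2"
  using mat_sq_integrable_shift[OF L2T_mat_sq_integrable(1)[OF assms(1)] _ assms(2)]
    L2T_mat_sq_integrable(2)[OF assms(1)]
  by (auto simp: algebra_simps)

lemma is_Psi_iff_fundamental_solution: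
  assumes "L2T \<phi>"
  shows "is_Psi \<phi> lam \<Psi> \<longleftrightarrow> is_fundamental_solution (2*pi) (\<lambda>t. Vmat \<phi> t + mat (lam/2)) \<Psi>"
  using mat_sq_integrable_mult_continuous_integrable_on[OF L2T_shift_mat_sq_integrable(1)[OF assms order_refl]]
  unfolding is_Psi_def is_fundamental_solution_def by auto

lemma Delta_eq_trace_fundamental_matrix:
  assumes "L2T \<phi>"
  shows "Delta \<phi> lam = trace (fundamental_matrix (\<lambda>t. Vmat \<phi> t + mat (lam/2)) (2*pi))"
  unfolding Delta_def
proof (rule the_equality)
  note W = L2T_shift_mat_sq_integrable(1)[OF assms order_refl]
  note solves = fundamental_matrix_solves[OF W, simplified]
  show "\<exists>\<Psi>. is_Psi \<phi> lam \<Psi> \<and> trace (fundamental_matrix (\<lambda>t. Vmat \<phi> t + mat (lam/2)) (2*pi))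
      = trace (\<Psi> (2*pi))"
    using solves is_Psi_iff_fundamental_solution[OF assms] by blast
  show "d = trace (fundamental_matrix (\<lambda>t. Vmat \<phi> t + mat (lam/2)) (2*pi))"
    if "\<exists>\<Psi>. is_Psi \<phi> lam \<Psi> \<and> d = trace (\<Psi> (2*pi))" for d
    using that fundamental_solution_unique[OF W _ solves, where x = "2*pi"]
      is_Psi_iff_fundamental_solution[OF assms] by auto
qed

lemma Delta_entire:
  assumes "L2T \<phi>"
  shows "Delta \<phi> holomorphic_on UNIV"
proof -
  have "Delta \<phi> = (\<lambda>lam. trace (fundamental_matrix (\<lambda>t. Vmat \<phi> t + mat (lam/2)) (2*pi)))"
    using Delta_eq_trace_fundamental_matrix[OF assms] by blast
  then show ?thesis
    using trace_fundamental_matrix_entire[OF L2T_mat_sq_integrable(1)[OF assms], of "2*pi"] by simp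
qed

lemma norm_Delta_diff_le:
  assumes \<phi>: "L2T \<phi>" "L2norm \<phi>^2 \<le> M" and \<psi>: "L2T \<psi>" "L2norm \<psi>^2 \<le> M" and lam: "cmod lam \<le> R"
  shows "cmod (Delta \<phi> lam - Delta \<psi> lam)
    \<le> 16 * pi * exp (4 * pi * (8 * pi * M + 2 * pi * R^2)) * L2norm (\<lambda>x. \<phi> x - \<psi> x)"
proof -
  define \<omega> where "\<omega> = 8 * pi * M + 2 * pi * R^2"
  define \<Phi> where "\<Phi> \<xi> = fundamental_matrix (\<lambda>t. Vmat \<xi> t + mat (lam/2)) (2*pi)" for \<xi>
  define d where "d = L2norm (\<lambda>x. \<phi> x - \<psi> x)"
  have bound: "mat_sq_integral (2*pi) (\<lambda>t. Vmat \<xi> t + mat (lam/2)) \<le> \<omega>"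
    if "L2T \<xi>" "L2norm \<xi>^2 \<le> M" for \<xi>
  proof -
    have "8 * pi * L2norm \<xi>^2 \<le> 8 * pi * M"
      using that(2) by (intro mult_left_mono) auto
    then show ?thesis
      using L2T_shift_mat_sq_integrable(2)[OF that(1) lam] unfolding \<omega>_def by linarith
  qed
  note W = L2T_shift_mat_sq_integrable(1)[OF _ lam]
  have "norm (\<Phi> \<phi> - \<Phi> \<psi>)^2
      \<le> 8 * (2*pi) * exp (4 * \<omega> * (2*pi)) * mat_sq_integral (2*pi) (\<lambda>t. Vmat \<phi> t - Vmat \<psi> t)"
    using fundamental_solution_stability[OF W[OF \<phi>(1)] bound[OF \<phi>] W[OF \<psi>(1)] bound[OF \<psi>]
        fundamental_matrix_solves[OF W[OF \<phi>(1)]] fundamental_matrix_solves[OF W[OF \<psi>(1)]], of "2*pi"]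
    by (simp add: \<Phi>_def)
  also have "\<dots> = (8 * pi * exp (4 * pi * \<omega>) * d)^2"
    unfolding Vmat_diff L2T_mat_sq_integrable(2)[OF L2T_diff[OF \<phi>(1) \<psi>(1)]] d_def
    by (simp add: power_mult_distrib power2_eq_square flip: exp_add)
  finally have "norm (\<Phi> \<phi> - \<Phi> \<psi>) \<le> 8 * pi * exp (4 * pi * \<omega>) * d"
    by (rule power2_le_imp_le) (simp add: d_def L2norm_def)
  moreover have "cmod (Delta \<phi> lam - Delta \<psi> lam) \<le> 2 * norm (\<Phi> \<phi> - \<Phi> \<psi>)"
    unfolding Delta_eq_trace_fundamental_matrix[OF \<phi>(1)] Delta_eq_trace_fundamental_matrix[OF \<psi>(1)]
      \<Phi>_def trace_sub[symmetric]
    by (rule norm_trace_le)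
  ultimately show ?thesis
    unfolding \<omega>_def d_def by simp
qed

lemma Delta_derivatives_lipschitz:
  "\<exists>C. \<forall>\<phi>\<in>Omega N. \<forall>\<psi>\<in>Omega N.
     sqrt (\<Sum>j\<le>k. (cmod ((deriv ^^ j) (Delta \<phi>) 0 - (deriv ^^ j) (Delta \<psi>) 0))^2)
       \<le> C * L2norm (\<lambda>x. \<phi> x - \<psi> x)"
proof (intro exI ballI)
  define L where "L = 16 * pi * exp (4 * pi * (8 * pi * N + 2 * pi * 1^2))"
  fix \<phi> \<psi> assume "\<phi> \<in> Omega N" "\<psi> \<in> Omega N"
  then have \<phi>: "L2T \<phi>" "L2norm \<phi>^2 \<le> N" and \<psi>: "L2T \<psi>" "L2norm \<psi>^2 \<le> N"
    by (auto dest: Omega_D)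
  define d where "d = L2norm (\<lambda>x. \<phi> x - \<psi> x)"
  define f where "f w = Delta \<phi> w - Delta \<psi> w" for w
  have hol: "f holomorphic_on UNIV"
    unfolding f_def using Delta_entire[OF \<phi>(1)] Delta_entire[OF \<psi>(1)] by (intro holomorphic_intros)
  have deriv: "cmod ((deriv ^^ j) (Delta \<phi>) 0 - (deriv ^^ j) (Delta \<psi>) 0) \<le> fact j * (L * d)" for j
  proof -
    have "(deriv ^^ j) f 0 = (deriv ^^ j) (Delta \<phi>) 0 - (deriv ^^ j) (Delta \<psi>) 0"
      unfolding f_def by (rule higher_deriv_diff[OF Delta_entire[OF \<phi>(1)] Delta_entire[OF \<psi>(1)]]) auto
    moreover have "norm ((deriv ^^ j) f 0) \<le> fact j * (L * d) / 1^j"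
    proof (rule Cauchy_inequality)
      show "f holomorphic_on ball 0 1"
        using hol by (rule holomorphic_on_subset) auto
      show "continuous_on (cball 0 1) f"
        using holomorphic_on_imp_continuous_on[OF hol] by (rule continuous_on_subset) auto
      show "norm (f w) \<le> L * d" if "norm (0 - w) = 1" for w
        unfolding f_def L_def d_def using that by (intro norm_Delta_diff_le \<phi> \<psi>) auto
    qed simp
    ultimately show ?thesis by simp
  qed
  have "sqrt (\<Sum>j\<le>k. (cmod ((deriv ^^ j) (Delta \<phi>) 0 - (deriv ^^ j) (Delta \<psi>) 0))^2)
      = L2_set (\<lambda>j. cmod ((deriv ^^ j) (Delta \<phi>) 0 - (deriv ^^ j) (Delta \<psi>) 0)) {..k}"
    by (simp add: L2_set_def)
  also have "\<dots> \<le> (\<Sum>j\<le>k. cmod ((deriv ^^ j) (Delta \<phi>) 0 - (deriv ^^ j) (Delta \<psi>) 0))"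
    by (rule L2_set_le_sum) simp
  also have "\<dots> \<le> (\<Sum>j\<le>k. fact j * (L * d))"
    by (rule sum_mono) (rule deriv)
  finally show "sqrt (\<Sum>j\<le>k. (cmod ((deriv ^^ j) (Delta \<phi>) 0 - (deriv ^^ j) (Delta \<psi>) 0))^2)
      \<le> ((\<Sum>j\<le>k. fact j) * L) * L2norm (\<lambda>x. \<phi> x - \<psi> x)"
    by (simp add: d_def sum_distrib_right mult.assoc)
qed

lemma Delta_continuous_uniformly_on_compact:
  assumes \<phi>: "L2T \<phi>" and K: "compact K" and \<epsilon>: "\<epsilon> > 0"
  shows "\<exists>\<delta>>0. \<forall>\<psi>. L2T \<psi> \<and> L2norm (\<lambda>x. \<psi> x - \<phi> x) < \<delta> \<longrightarrow>
     (\<forall>lam\<in>K. cmod (Delta \<psi> lam - Delta \<phi> lam) < \<epsilon>)"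
proof -
  obtain R where R: "\<And>lam. lam \<in> K \<Longrightarrow> cmod lam \<le> R"
    using compact_imp_bounded[OF K] by (auto simp: bounded_iff)
  define M where "M = 2 * L2norm \<phi>^2 + 2"
  define L where "L = 16 * pi * exp (4 * pi * (8 * pi * M + 2 * pi * R^2))"
  have L: "0 < L" unfolding L_def by simp
  show ?thesis
  proof (intro exI[of _ "min 1 (\<epsilon> / L)"] conjI allI impI ballI)
    show "0 < min 1 (\<epsilon> / L)" using \<epsilon> L by simp
    fix \<psi> lam assume "L2T \<psi> \<and> L2norm (\<lambda>x. \<psi> x - \<phi> x) < min 1 (\<epsilon> / L)" and lam: "lam \<in> K"
    then have \<psi>: "L2T \<psi>" and close: "L2norm (\<lambda>x. \<psi> x - \<phi> x) < 1" "L2norm (\<lambda>x. \<psi> x - \<phi> x) < \<epsilon> / L"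
      by auto
    have "L2norm (\<lambda>x. \<psi> x - \<phi> x)^2 \<le> 1"
      using close(1) L2norm_def by (simp add: power_le_one)
    then have "L2norm \<psi>^2 \<le> M"
      using L2norm_sq_le_diff[OF \<phi> \<psi>] unfolding M_def by linarith
    moreover have "L2norm \<phi>^2 \<le> M" unfolding M_def by simp
    ultimately have "cmod (Delta \<psi> lam - Delta \<phi> lam) \<le> L * L2norm (\<lambda>x. \<psi> x - \<phi> x)"
      unfolding L_def by (intro norm_Delta_diff_le \<phi> \<psi> R lam)
    also have "\<dots> < \<epsilon>"
      using close(2) L by (simp add: field_simps)
    finally show "cmod (Delta \<psi> lam - Delta \<phi> lam) < \<epsilon>" .
  qed
qed

theorem lemma3p1:
  shows "(\<forall>(k::nat) (N::real). \<exists>C::real. \<forall>\<phi>\<in>Omega N. \<forall>\<psi>\<in>Omega N.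
            sqrt (\<Sum>j\<le>k. (cmod ((deriv ^^ j) (Delta \<phi>) 0 - (deriv ^^ j) (Delta \<psi>) 0))^2)
              \<le> C * L2norm (\<lambda>x. \<phi> x - \<psi> x))
       \<and> (\<forall>\<phi>. L2T \<phi> \<longrightarrow> (\<forall>K::complex set. compact K \<longrightarrow>
            (\<forall>\<epsilon>>0. \<exists>\<delta>>0. \<forall>\<psi>. L2T \<psi> \<and> L2norm (\<lambda>x. \<psi> x - \<phi> x) < \<delta> \<longrightarrow>
               (\<forall>lam\<in>K. cmod (Delta \<psi> lam - Delta \<phi> lam) < \<epsilon>))))"
  using Delta_derivatives_lipschitz Delta_continuous_uniformly_on_compact by blast

end
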